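(* Let the unit segment be fixed in the plane. A real number $r$ is RA-constructible if and only if $r$ can be obtained from $1$ by finitely many applications of the field operations $+,-,\times,\div$ (division by nonzero numbers), of $x\mapsto\sqrt{x}$ applied to previously obtained positive reals $x$, and of $x\mapsto\sin(\pi x)$ applied to previously obtained reals $x$. Likewise, a real number $r$ is RRA-constructible if and only if $r$ can be obtained from $1$ by finitely many applications of the field operations, of $x\mapsto\sqrt{x}$ applied to previously obtained positive reals $x$, and of $x\mapsto\frac{1}{\pi}\arcsin(x)$ applied to previously obtained reals $x$ with $|x|\le 1$.
   Context: Constructions take place in the Euclidean plane, starting from a segment declared to have length $1$ (it fixes Cartesian coordinates: the origin at one endpoint, the horizontal axis along the segment). The available tools are the straightedge (draw the line through two constructed points), the compass (draw the circle with a constructed center through a constructed point) and intersection of constructed lines/circles, together with one additional tool: - the right anglesector (RA): given two constructed segments of lengths $p,q$, it divides the right angle in the ratio $p:q$, i.e. produces the ray at angle $\frac{p}{q}\cdot\frac{\pi}{2}$ inside a given constructed right angle (for $p\le q$); - the reverse right anglesector (RRA): given a constructed acute angle $\theta$ inside a constructed right angle and a constructed segment, it divides that segment in the ratio $\theta:\frac{\pi}{2}$ (i.e. produces the point at fraction $\frac{2\theta}{\pi}$ of its length). A real number is RA-constructible (resp. RRA-constructible) if its absolute value is the length of a segment constructible from the unit segment with straightedge, compass and the RA (resp. RRA) tool. *)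

theory Defs
  imports Complex_Main
begin

text \<open>Points of the Euclidean plane are complex numbers; the unit segment is
  the segment from 0 to 1 (origin at one endpoint, real axis along it).\<close>

datatype tool = RA_tool | RRA_tool

definition on_line :: "complex \<Rightarrow> complex \<Rightarrow> complex \<Rightarrow> bool" where
  "on_line a b z \<longleftrightarrow> (\<exists>t::real. z = a + of_real t * (b - a))"

definition on_circle :: "complex \<Rightarrow> complex \<Rightarrow> complex \<Rightarrow> bool" where
  "on_circle c d z \<longleftrightarrow> cmod (z - c) = cmod (d - c)"

definition right_angle :: "complex \<Rightarrow> complex \<Rightarrow> complex \<Rightarrow> bool" where
  "right_angle V A B \<longleftrightarrow> A \<noteq> V \<and> B \<noteq> V \<and> Re ((A - V) * cnj (B - V)) = 0"

definition angle_at :: "complex \<Rightarrow> complex \<Rightarrow> complex \<Rightarrow> real" where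
  "angle_at V A C = arccos (Re ((C - V) * cnj (A - V)) / (cmod (C - V) * cmod (A - V)))"

text \<open>The point on the ray inside the right angle AOB making angle th with OA,
  at distance |VA| from V.\<close>
definition ray_point :: "complex \<Rightarrow> complex \<Rightarrow> complex \<Rightarrow> real \<Rightarrow> complex" where
  "ray_point V A B th = V + of_real (cos th) * (A - V)
      + of_real (sin th * cmod (A - V) / cmod (B - V)) * (B - V)"

inductive constr :: "tool \<Rightarrow> complex \<Rightarrow> bool" for T :: tool where
  zero: "constr T 0"
| one: "constr T 1"
| line_line: "\<lbrakk>constr T a; constr T b; constr T c; constr T d; a \<noteq> b; c \<noteq> d;
     \<not> (on_line a b c \<and> on_line a b d); on_line a b z; on_line c d z\<rbrakk> \<Longrightarrow> constr T z"
| line_circle: "\<lbrakk>constr T a; constr T b; constr T c; constr T d; a \<noteq> b; c \<noteq> d;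
     on_line a b z; on_circle c d z\<rbrakk> \<Longrightarrow> constr T z"
| circle_circle: "\<lbrakk>constr T c; constr T d; constr T c'; constr T d'; c \<noteq> d; c' \<noteq> d';
     c \<noteq> c' \<or> cmod (d - c) \<noteq> cmod (d' - c'); on_circle c d z; on_circle c' d' z\<rbrakk>
     \<Longrightarrow> constr T z"
| RA: "\<lbrakk>T = RA_tool; constr T V; constr T A; constr T B; right_angle V A B;
     constr T P1; constr T P2; constr T Q1; constr T Q2;
     p = cmod (P2 - P1); q = cmod (Q2 - Q1); 0 < q; p \<le> q\<rbrakk>
     \<Longrightarrow> constr T (ray_point V A B ((p / q) * (pi / 2)))"
| RRA: "\<lbrakk>T = RRA_tool; constr T V; constr T A; constr T B; right_angle V A B;
     constr T C; C - V = of_real a * (A - V) + of_real b * (B - V); 0 < a; 0 < b;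
     constr T P; constr T Q\<rbrakk>
     \<Longrightarrow> constr T (P + of_real (2 * angle_at V A C / pi) * (Q - P))"

definition RA_constructible :: "real \<Rightarrow> bool" where
  "RA_constructible r \<longleftrightarrow>
     (\<exists>P Q. constr RA_tool P \<and> constr RA_tool Q \<and> \<bar>r\<bar> = cmod (P - Q))"

definition RRA_constructible :: "real \<Rightarrow> bool" where
  "RRA_constructible r \<longleftrightarrow>
     (\<exists>P Q. constr RRA_tool P \<and> constr RRA_tool Q \<and> \<bar>r\<bar> = cmod (P - Q))"

inductive_set RA_numbers :: "real set" where
  one: "1 \<in> RA_numbers"
| add: "x \<in> RA_numbers \<Longrightarrow> y \<in> RA_numbers \<Longrightarrow> x + y \<in> RA_numbers"
| diff: "x \<in> RA_numbers \<Longrightarrow> y \<in> RA_numbers \<Longrightarrow> x - y \<in> RA_numbers"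
| mult: "x \<in> RA_numbers \<Longrightarrow> y \<in> RA_numbers \<Longrightarrow> x * y \<in> RA_numbers"
| divide: "x \<in> RA_numbers \<Longrightarrow> y \<in> RA_numbers \<Longrightarrow> y \<noteq> 0 \<Longrightarrow> x / y \<in> RA_numbers"
| sqrt: "x \<in> RA_numbers \<Longrightarrow> 0 < x \<Longrightarrow> sqrt x \<in> RA_numbers"
| sin_pi: "x \<in> RA_numbers \<Longrightarrow> sin (pi * x) \<in> RA_numbers"

inductive_set RRA_numbers :: "real set" where
  one: "1 \<in> RRA_numbers"
| add: "x \<in> RRA_numbers \<Longrightarrow> y \<in> RRA_numbers \<Longrightarrow> x + y \<in> RRA_numbers"
| diff: "x \<in> RRA_numbers \<Longrightarrow> y \<in> RRA_numbers \<Longrightarrow> x - y \<in> RRA_numbers"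
| mult: "x \<in> RRA_numbers \<Longrightarrow> y \<in> RRA_numbers \<Longrightarrow> x * y \<in> RRA_numbers"
| divide: "x \<in> RRA_numbers \<Longrightarrow> y \<in> RRA_numbers \<Longrightarrow> y \<noteq> 0 \<Longrightarrow> x / y \<in> RRA_numbers"
| sqrt: "x \<in> RRA_numbers \<Longrightarrow> 0 < x \<Longrightarrow> sqrt x \<in> RRA_numbers"
| arcsin_pi: "x \<in> RRA_numbers \<Longrightarrow> \<bar>x\<bar> \<le> 1 \<Longrightarrow> arcsin x / pi \<in> RRA_numbers"

end

theory Submission
  imports Defs
begin

text \<open>Ruler and compass alone already realise the field operations and square roots on the
  real axis; the RA tool applied to the right angle at 0 between 1 and \<open>\<i>\<close> yields the
  point \<open>cos (\<pi>x) + \<i> sin (\<pi>x)\<close> for \<open>x \<in> [0, 1/2]\<close>, and the RRA tool applied to the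
  point \<open>sqrt (1 - x\<^sup>2) + \<i> x\<close> yields \<open>2 arcsin x / \<pi>\<close>; periodicity and oddness handle
  the remaining arguments.

  Conversely, every subfield of \<open>\<real>\<close> closed under square roots
  contains the coordinates of all intersections of lines and circles through points with
  coordinates in it, and one closed in addition under \<open>sin (\<pi>x)\<close> (resp. \<open>arcsin x / \<pi>\<close>)
  contains the coordinates of the points produced by the RA (resp. RRA) tool, since
  \<open>cos \<theta>\<close>, \<open>sin \<theta>\<close> for \<open>\<theta> = \<pi>p/(2q)\<close> are such sines and \<open>2 arccos w / \<pi> = 1 - 2 arcsin w / \<pi>\<close>.
  By induction over constructions, the coordinates, hence the lengths, of constructible
  points lie in the smallest such field.\<close>

section \<open>Constructions with straightedge and compass\<close>

lemma constr_reflect: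
  assumes "constr T a" "constr T b"
  shows "constr T (2 * b - a)"
proof (cases "a = b")
  case True
  then show ?thesis using assms by (simp add: algebra_simps)
next
  case False
  show ?thesis
  proof (rule constr.line_circle[of T a b b a])
    show "on_line a b (2 * b - a)" unfolding on_line_def
      by (rule exI[of _ 2]) (simp add: algebra_simps)
    show "on_circle b a (2 * b - a)" unfolding on_circle_def
      by (simp add: norm_minus_commute algebra_simps)
  qed (use assms False in simp_all)
qed

lemma constr_uminus: "constr T a \<Longrightarrow> constr T (- a)"
  using constr_reflect[OF _ constr.zero] by simp

lemma constr_apex:
  assumes "constr T a" "constr T b" and "cmod w = 1" "cmod (w - 1) = 1"
  shows "constr T (a + (b - a) * w)"
proof (cases "a = b")
  case True
  then show ?thesis using assms by simp
next
  case False
  show ?thesis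
  proof (rule constr.circle_circle[of T a b b a])
    show "on_circle a b (a + (b - a) * w)" unfolding on_circle_def
      by (simp add: norm_mult assms)
    have "a + (b - a) * w - b = (b - a) * (w - 1)" by (simp add: algebra_simps)
    moreover have "cmod (b - a) = cmod (a - b)" by (rule norm_minus_commute)
    ultimately show "on_circle b a (a + (b - a) * w)" unfolding on_circle_def
      by (simp add: norm_mult assms)
  qed (use assms False in simp_all)
qed

definition sixth_root :: complex where
  "sixth_root = Complex (1/2) (sqrt 3 / 2)"

lemma norm_sixth_root:
  "cmod sixth_root = 1" "cmod (sixth_root - 1) = 1"
  "cmod (cnj sixth_root) = 1" "cmod (cnj sixth_root - 1) = 1"
  by (simp_all add: sixth_root_def cmod_def power_divide)

lemma constr_midpoint:
  assumes "constr T a" "constr T b"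
  shows "constr T ((a + b) / 2)"
proof (cases "a = b")
  case True
  then show ?thesis using assms by simp
next
  case False
  let ?e1 = "a + (b - a) * sixth_root" and ?e2 = "a + (b - a) * cnj sixth_root"
  have apexes: "constr T ?e1" "constr T ?e2"
    using assms by (simp_all add: constr_apex norm_sixth_root)
  have "?e1 \<noteq> ?e2" using False by (auto simp: sixth_root_def complex_eq_iff)
  moreover have "\<not> on_line a b ?e1"
  proof
    assume "on_line a b ?e1"
    then obtain t where "?e1 = a + of_real t * (b - a)" unfolding on_line_def by blast
    then have "(b - a) * (sixth_root - of_real t) = 0" by (simp add: algebra_simps)
    then have "sixth_root = of_real t" using False by simp
    then show False by (simp add: sixth_root_def complex_eq_iff)
  qed
  moreover have "on_line a b ((a + b) / 2)" unfolding on_line_def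
    by (rule exI[of _ "1/2"]) (simp add: field_simps)
  moreover have "on_line ?e1 ?e2 ((a + b) / 2)" unfolding on_line_def
  proof (rule exI[of _ "1/2"])
    have "1/2 - sixth_root = of_real (1/2) * (cnj sixth_root - sixth_root)"
      by (simp add: sixth_root_def complex_eq_iff)
    moreover have "(a + b) / 2 - ?e1 = (b - a) * (1/2 - sixth_root)"
      by (simp add: field_simps)
    moreover have "?e2 - ?e1 = (b - a) * (cnj sixth_root - sixth_root)"
      by (simp add: algebra_simps)
    ultimately have "(a + b) / 2 - ?e1 = of_real (1/2) * (?e2 - ?e1)"
      by (metis mult.left_commute)
    then show "(a + b) / 2 = ?e1 + of_real (1/2) * (?e2 - ?e1)"
      by (metis add.commute diff_add_cancel)
  qed
  ultimately show ?thesis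
    using constr.line_line[of T a b ?e1 ?e2] assms apexes False by blast
qed

lemma constr_add:
  assumes "constr T a" "constr T b"
  shows "constr T (a + b)"
proof -
  have "2 * ((a + b) / 2) - 0 = a + b" by simp
  then show ?thesis using constr_reflect[OF constr.zero constr_midpoint[OF assms]] by metis
qed

lemma constr_diff: "constr T a \<Longrightarrow> constr T b \<Longrightarrow> constr T (a - b)"
  using constr_add[OF _ constr_uminus] by fastforce

lemma constr_cnj:
  assumes "constr T z"
  shows "constr T (cnj z)"
proof (cases "z = 0 \<or> z = 1")
  case True
  then show ?thesis using assms by auto
next
  case False
  show ?thesis
  proof (rule constr.circle_circle[of T 0 z 1 z])
    show "on_circle 0 z (cnj z)" unfolding on_circle_def by simp
    have "cnj z - 1 = cnj (z - 1)" by simp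
    then show "on_circle 1 z (cnj z)" unfolding on_circle_def by (metis complex_mod_cnj)
  qed (use assms False constr.zero constr.one in simp_all)
qed

lemma constr_ii: "constr T \<i>"
proof -
  have "-1 + (1 - (-1)) * sixth_root = \<i> * sqrt 3"
    unfolding sixth_root_def by (simp add: complex_eq_iff del: One_nat_def)
  then have apex: "constr T (\<i> * sqrt 3)"
    using constr_apex[OF constr_uminus[OF constr.one] constr.one] norm_sixth_root by metis
  show ?thesis
  proof (rule constr.line_circle[of T 0 "\<i> * sqrt 3" 0 1])
    show "on_line 0 (\<i> * sqrt 3) \<i>" unfolding on_line_def
      by (rule exI[of _ "1 / sqrt 3"]) (simp add: complex_eq_iff)
    show "on_circle 0 1 \<i>" unfolding on_circle_def by simp
  qed (use apex constr.zero constr.one in simp_all)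
qed

lemma constr_ii_times_of_real_iff: "constr T (\<i> * of_real x) \<longleftrightarrow> constr T (of_real x)"
proof (cases "x = 0")
  case True
  then show ?thesis using constr.zero by simp
next
  case False
  have "constr T (\<i> * of_real x)" if "constr T (of_real x)"
  proof (rule constr.line_circle[of T 0 \<i> 0 "of_real x"])
    show "on_line 0 \<i> (\<i> * of_real x)" unfolding on_line_def by (rule exI[of _ x]) simp
    show "on_circle 0 (of_real x) (\<i> * of_real x)" unfolding on_circle_def by (simp add: norm_mult)
  qed (use that False constr.zero constr_ii in simp_all)
  moreover have "constr T (of_real x)" if "constr T (\<i> * of_real x)"
  proof (rule constr.line_circle[of T 0 1 0 "\<i> * of_real x"])
    show "on_line 0 1 (of_real x)" unfolding on_line_def by (rule exI[of _ x]) simp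
    show "on_circle 0 (\<i> * of_real x) (of_real x)" unfolding on_circle_def by (simp add: norm_mult)
  qed (use that False constr.zero constr.one in simp_all)
  ultimately show ?thesis by blast
qed

lemma constr_Im:
  assumes "constr T z"
  shows "constr T (of_real (Im z))"
proof -
  have "(z + - cnj z) / 2 = \<i> * of_real (Im z)" by (simp add: complex_eq_iff)
  then show ?thesis
    using constr_midpoint[OF assms constr_uminus[OF constr_cnj[OF assms]]]
    by (simp add: constr_ii_times_of_real_iff)
qed

lemma constr_line_real_axis:
  assumes "constr T a" "constr T (a + d)" "Im d \<noteq> 0"
  shows "constr T (a - of_real (Im a / Im d) * d)"
proof -
  have "\<not> (on_line a (a + d) 0 \<and> on_line a (a + d) 1)"
  proof
    assume "on_line a (a + d) 0 \<and> on_line a (a + d) 1"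
    then obtain t s where "0 = a + of_real t * d" "1 = a + of_real s * d"
      unfolding on_line_def by auto
    then have "(1::complex) - 0 = (a + of_real s * d) - (a + of_real t * d)" by simp
    then have "1 = of_real (s - t) * d" by (simp add: algebra_simps)
    then have "Re 1 = Re (of_real (s - t) * d)" "Im 1 = Im (of_real (s - t) * d)" by simp_all
    with assms(3) show False by simp
  qed
  moreover have "on_line a (a + d) (a - of_real (Im a / Im d) * d)" unfolding on_line_def
    by (rule exI[of _ "- (Im a / Im d)"]) simp
  moreover have "on_line 0 1 (a - of_real (Im a / Im d) * d)" unfolding on_line_def
    by (rule exI[of _ "Re a - Im a / Im d * Re d"]) (use assms(3) in \<open>simp add: complex_eq_iff\<close>)
  moreover have "a \<noteq> a + d" using assms(3) by auto
  ultimately show ?thesis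
    using constr.line_line[of T a "a + d" 0 1] assms(1,2) constr.zero constr.one by simp
qed

text \<open>Intercept theorem: the parallel through \<open>\<i> x\<close> to the line from \<open>\<i>\<close> to \<open>y\<close> meets the
  real axis at \<open>x y\<close>, and the parallel through \<open>\<i>\<close> to the line from \<open>\<i> y\<close> to \<open>x\<close> meets it
  at \<open>x / y\<close>.\<close>

lemma constr_of_real_mult:
  assumes "constr T (of_real x)" "constr T (of_real y)"
  shows "constr T (of_real (x * y))"
proof -
  have a: "constr T (\<i> * of_real x)" using assms(1) by (simp add: constr_ii_times_of_real_iff)
  have "constr T (\<i> * of_real x + (of_real y - \<i>))"
    by (intro constr_add constr_diff a assms constr_ii)
  moreover have "\<i> * of_real x - of_real (Im (\<i> * of_real x) / Im (of_real y - \<i>)) * (of_real y - \<i>)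
        = of_real (x * y)" by (simp add: complex_eq_iff)
  ultimately show ?thesis using constr_line_real_axis[OF a] by fastforce
qed

lemma constr_of_real_divide:
  assumes "constr T (of_real x)" "constr T (of_real y)"
  shows "constr T (of_real (x / y))"
proof (cases "y = 0")
  case True
  then show ?thesis using constr.zero by simp
next
  case False
  have "constr T (\<i> + (of_real x - \<i> * of_real y))"
    using assms by (intro constr_add constr_diff constr_ii) (simp_all add: constr_ii_times_of_real_iff)
  moreover have "\<i> - of_real (Im \<i> / Im (of_real x - \<i> * of_real y)) * (of_real x - \<i> * of_real y)
        = of_real (x / y)" using False by (simp add: complex_eq_iff field_simps)
  ultimately show ?thesis using constr_line_real_axis[OF constr_ii] False by fastforce
qed

text \<open>The circle with diameter from \<open>-1\<close> to \<open>x\<close> meets the imaginary axis at \<open>\<i> sqrt x\<close>.\<close>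

lemma constr_of_real_sqrt:
  assumes "constr T (of_real x)" "0 < x"
  shows "constr T (of_real (sqrt x))"
proof -
  let ?c = "(of_real x + - 1) / 2 :: complex"
  have "constr T ?c" by (intro constr_midpoint assms constr_uminus constr.one)
  moreover have "on_circle ?c (of_real x) (\<i> * of_real (sqrt x))"
    unfolding on_circle_def cmod_def using assms(2) by (simp add: power2_eq_square field_simps)
  moreover have "on_line 0 \<i> (\<i> * of_real (sqrt x))" unfolding on_line_def
    by (rule exI[of _ "sqrt x"]) simp
  moreover have "?c \<noteq> of_real x" using assms(2) by (simp add: complex_eq_iff field_simps)
  ultimately have "constr T (\<i> * of_real (sqrt x))"
    using constr.line_circle[of T 0 \<i> ?c "of_real x"] assms(1) constr.zero constr_ii by simp
  then show ?thesis by (simp add: constr_ii_times_of_real_iff)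
qed

lemma constr_of_int: "constr T (of_int n)"
proof (induction n rule: int_induct[where k = 0])
  case base
  then show ?case using constr.zero by simp
next
  case (step1 i)
  then show ?case using constr_add[OF _ constr.one] by (metis of_int_add of_int_1)
next
  case (step2 i)
  then show ?case using constr_diff[OF _ constr.one] by (metis of_int_diff of_int_1)
qed

section \<open>The tools on the right angle at the origin\<close>

lemma right_angle_one_ii: "right_angle 0 1 \<i>"
  unfolding right_angle_def by simp

lemma constr_RA_sin_pi_half_interval:
  assumes "constr RA_tool (of_real y)" "0 \<le> y" "y \<le> 1/2"
  shows "constr RA_tool (of_real (sin (pi * y)))"
proof -
  have "constr RA_tool (of_real (2 * y))"
    using constr_add[OF assms(1) assms(1)] by (metis mult_2 of_real_add)
  then have "constr RA_tool (ray_point 0 1 \<i> ((2 * y / 1) * (pi / 2)))"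
    using assms(2,3)
    by (intro constr.RA[of RA_tool 0 1 \<i> 0 "of_real (2 * y)" 0 1 "2 * y" 1]
        constr.zero constr.one constr_ii right_angle_one_ii) simp_all
  moreover have "Im (ray_point 0 1 \<i> ((2 * y / 1) * (pi / 2))) = sin (pi * y)"
    unfolding ray_point_def by (simp add: mult.commute)
  ultimately show ?thesis using constr_Im by metis
qed

lemma constr_RA_sin_pi:
  assumes "constr RA_tool (of_real x)"
  shows "constr RA_tool (of_real (sin (pi * x)))"
proof -
  define n where "n = \<lfloor>x\<rfloor>"
  define y where "y = x - of_int n"
  have y: "0 \<le> y" "y < 1" unfolding y_def n_def by linarith+
  have cy: "constr RA_tool (of_real y)"
    unfolding y_def using constr_diff[OF assms constr_of_int[of _ n]] by simp
  have sin_y: "constr RA_tool (of_real (sin (pi * y)))"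
  proof (cases "y \<le> 1/2")
    case True
    then show ?thesis using constr_RA_sin_pi_half_interval[OF cy y(1)] by simp
  next
    case False
    have "constr RA_tool (of_real (1 - y))" using constr_diff[OF constr.one cy] by simp
    then have "constr RA_tool (of_real (sin (pi * (1 - y))))"
      by (rule constr_RA_sin_pi_half_interval) (use False y in simp_all)
    then show ?thesis by (simp add: right_diff_distrib)
  qed
  have "sin (pi * x) = sin (pi * y + pi * of_int n)" unfolding y_def by (simp add: algebra_simps)
  also have "\<dots> = (if even n then sin (pi * y) else - sin (pi * y))" by (simp add: sin_add)
  finally show ?thesis using sin_y constr_uminus[OF sin_y] by simp
qed

lemma constr_RRA_arcsin_open_interval:
  assumes "constr RRA_tool (of_real x)" "0 < x" "x < 1"
  shows "constr RRA_tool (of_real (2 * arcsin x / pi))"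
proof -
  define a where "a = sqrt (1 - x\<^sup>2)"
  have a: "0 < a" unfolding a_def using assms(2,3) by (simp add: abs_square_less_1)
  have "constr RRA_tool (of_real (1 - x\<^sup>2))"
    using constr_diff[OF constr.one constr_of_real_mult[OF assms(1) assms(1)]]
    by (simp add: power2_eq_square)
  then have "constr RRA_tool (of_real a)" unfolding a_def
    by (rule constr_of_real_sqrt) (use assms(2,3) in \<open>simp add: abs_square_less_1\<close>)
  then have C: "constr RRA_tool (of_real a + \<i> * of_real x)"
    using assms(1) by (intro constr_add) (simp_all add: constr_ii_times_of_real_iff)
  have "constr RRA_tool (0 + of_real (2 * angle_at 0 1 (of_real a + \<i> * of_real x) / pi) * (1 - 0))"
    by (rule constr.RRA[OF refl constr.zero constr.one constr_ii right_angle_one_ii C _ a assms(2)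
          constr.zero constr.one]) simp
  moreover have "cmod (of_real a + \<i> * of_real x) = 1"
    unfolding cmod_def a_def using assms(2,3) by (simp add: abs_square_less_1 less_imp_le)
  then have "angle_at 0 1 (of_real a + \<i> * of_real x) = arcsin x"
    unfolding angle_at_def a_def using arcsin_arccos_sqrt_pos[of x] assms(2,3) by simp
  ultimately show ?thesis by simp
qed

lemma constr_RRA_arcsin_div_pi:
  assumes "constr RRA_tool (of_real x)" "\<bar>x\<bar> \<le> 1"
  shows "constr RRA_tool (of_real (arcsin x / pi))"
proof -
  have two: "constr RRA_tool (of_real 2)" using constr_of_int[of RRA_tool 2] by simp
  have nonneg: "constr RRA_tool (of_real (arcsin y / pi))"
    if y: "0 \<le> y" "y \<le> 1" and cy: "constr RRA_tool (of_real y)" for y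
  proof -
    consider "y = 0" | "y = 1" | "0 < y" "y < 1" using y by linarith
    then show ?thesis
    proof cases
      case 1
      then show ?thesis using constr.zero by simp
    next
      case 2
      have "constr RRA_tool (of_real (1 / 2))"
        by (rule constr_of_real_divide[OF _ two]) (simp add: constr.one)
      then show ?thesis using 2 by simp
    next
      case 3
      then show ?thesis
        using constr_of_real_divide[OF constr_RRA_arcsin_open_interval[OF cy 3]
two] by simp
    qed
  qed
  show ?thesis
  proof (cases "0 \<le> x")
    case True
    then show ?thesis using nonneg assms by simp
  next
    case False
    then have "constr RRA_tool (of_real (arcsin (- x) / pi))"
      using nonneg[of "- x"] constr_uminus[OF assms(1)] assms(2) by simp
    then show ?thesis using constr_uminus assms(2) by (fastforce simp: arcsin_minus)
  qed
qed

section \<open>Coordinates of constructible points\<close>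

lemma parallel_lines_meeting_coincide:
  assumes "a \<noteq> b" "on_line a b z" "on_line c d z"
    and parallel: "Re (b - a) * Im (d - c) = Im (b - a) * Re (d - c)"
  shows "on_line a b c \<and> on_line a b d"
proof -
  obtain t where t: "z = a + of_real t * (b - a)" using assms(2) unfolding on_line_def by blast
  obtain s where s: "z = c + of_real s * (d - c)" using assms(3) unfolding on_line_def by blast
  define u v where "u = b - a" and "v = d - c"
  have par: "Re u * Im v = Im u * Re v" using parallel unfolding u_def v_def .
  define N where "N = (Re u)\<^sup>2 + (Im u)\<^sup>2"
  have N: "N \<noteq> 0" unfolding N_def u_def using assms(1) by (auto simp: complex_eq_iff)
  define l where "l = (Re v * Re u + Im v * Im u) / N"
  have "l * N = Re v * Re u + Im v * Im u" unfolding l_def using N by simp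
  then have "Re v * N = (l * N) * Re u" "Im v * N = (l * N) * Im u"
    using par unfolding N_def by (simp_all add: power2_eq_square) algebra+
  then have "v = of_real l * u" using N by (simp add: complex_eq_iff)
  then have dc: "d - c = of_real l * (b - a)" unfolding u_def v_def .
  have c: "c = a + of_real (t - s * l) * (b - a)" using t s dc by (simp add: algebra_simps)
  have "d = c + of_real l * (b - a)" using dc by (simp add: algebra_simps)
  then have "d = a + of_real (t - s * l + l) * (b - a)" unfolding c by (simp add: algebra_simps)
  with c show ?thesis unfolding on_line_def by blast
qed

locale sqrt_closed_subfield =
  fixes K :: "real set"
  assumes one_mem: "1 \<in> K"
    and add_mem: "x \<in> K \<Longrightarrow> y \<in> K \<Longrightarrow> x + y \<in> K"
    and diff_mem: "x \<in> K \<Longrightarrow> y \<in> K \<Longrightarrow> x - y \<in> K"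
    and mult_mem: "x \<in> K \<Longrightarrow> y \<in> K \<Longrightarrow> x * y \<in> K"
    and divide_mem_nonzero: "x \<in> K \<Longrightarrow> y \<in> K \<Longrightarrow> y \<noteq> 0 \<Longrightarrow> x / y \<in> K"
    and sqrt_mem_pos: "x \<in> K \<Longrightarrow> 0 < x \<Longrightarrow> sqrt x \<in> K"
begin

lemma zero_mem: "0 \<in> K"
  using diff_mem[OF one_mem one_mem] by simp

lemma two_mem: "2 \<in> K"
  using add_mem[OF one_mem one_mem] by simp

lemma divide_mem: "x \<in> K \<Longrightarrow> y \<in> K \<Longrightarrow> x / y \<in> K"
  using divide_mem_nonzero zero_mem by (cases "y = 0") auto

lemma uminus_mem: "x \<in> K \<Longrightarrow> - x \<in> K"
  using diff_mem[OF zero_mem] by fastforce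

lemma power2_mem: "x \<in> K \<Longrightarrow> x\<^sup>2 \<in> K"
  by (simp add: power2_eq_square mult_mem)

lemma sqrt_mem:
  assumes "x \<in> K"
  shows "sqrt x \<in> K"
proof (cases x "0 :: real" rule: linorder_cases)
  case less
  then have "sqrt (- x) \<in> K" using assms by (intro sqrt_mem_pos uminus_mem) simp_all
  then show ?thesis using uminus_mem[of "sqrt (- x)"] by (simp add: real_sqrt_minus)
qed (use assms zero_mem sqrt_mem_pos in auto)

lemma mem_if_power2_mem: "w\<^sup>2 \<in> K \<Longrightarrow> w \<in> K"
  using sqrt_mem[of "w\<^sup>2"] uminus_mem[of "\<bar>w\<bar>"] by (cases "0 \<le> w") auto

lemmas field_mems = zero_mem one_mem two_mem add_mem diff_mem mult_mem divide_mem uminus_mem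
  power2_mem

definition coords_in :: "complex \<Rightarrow> bool" where
  "coords_in z \<longleftrightarrow> Re z \<in> K \<and> Im z \<in> K"

lemma norm_mem: "coords_in z \<Longrightarrow> cmod z \<in> K"
  unfolding coords_in_def cmod_def by (intro sqrt_mem add_mem power2_mem) auto

lemma coords_in_diff: "coords_in a \<Longrightarrow> coords_in b \<Longrightarrow> coords_in (a - b)"
  unfolding coords_in_def by (simp add: diff_mem)

lemma coords_in_mult: "coords_in a \<Longrightarrow> coords_in b \<Longrightarrow> coords_in (a * b)"
  unfolding coords_in_def by (simp add: field_mems)

lemma coords_in_cnj: "coords_in a \<Longrightarrow> coords_in (cnj a)"
  unfolding coords_in_def by (simp add: uminus_mem)

lemma coords_in_line_point:
  "coords_in a \<Longrightarrow> coords_in b \<Longrightarrow> t \<in> K \<Longrightarrow> coords_in (a + of_real t * (b - a))"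
  unfolding coords_in_def by (simp add: field_mems)

lemma coords_in_line_line:
  assumes "coords_in a" "coords_in b" "coords_in c" "coords_in d"
    and "a \<noteq> b" "\<not> (on_line a b c \<and> on_line a b d)" "on_line a b z" "on_line c d z"
  shows "coords_in z"
proof -
  obtain t where t: "z = a + of_real t * (b - a)" using assms(7) unfolding on_line_def by blast
  obtain s where s: "z = c + of_real s * (d - c)" using assms(8) unfolding on_line_def by blast
  define D where "D = Re (b - a) * Im (d - c) - Im (b - a) * Re (d - c)"
  have "D \<noteq> 0"
    using parallel_lines_meeting_coincide[OF assms(5,7,8)] assms(6) unfolding D_def by auto
  moreover have "Re (a + of_real t * (b - a)) = Re (c + of_real s * (d - c))"
    "Im (a + of_real t * (b - a)) = Im (c + of_real s * (d - c))"
    using t s by simp_all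
  then have "t * D = Re (c - a) * Im (d - c) - Im (c - a) * Re (d - c)"
    unfolding D_def by simp algebra
  ultimately have "t = (Re (c - a) * Im (d - c) - Im (c - a) * Re (d - c)) / D"
    by (simp add: field_simps)
  then have "t \<in> K" using assms(1-4) unfolding D_def coords_in_def by (simp add: field_mems)
  then show ?thesis unfolding t using assms(1,2) by (rule coords_in_line_point[rotated 2])
qed

lemma coords_in_line_circle:
  assumes "coords_in a" "coords_in b" "coords_in c" "coords_in d"
    and "a \<noteq> b" "on_line a b z" "on_circle c d z"
  shows "coords_in z"
proof -
  obtain t where t: "z = a + of_real t * (b - a)" using assms(6) unfolding on_line_def by blast
  define u w R where "u = b - a" and "w = a - c" and "R = (cmod (d - c))\<^sup>2"
  have "z - c = w + of_real t * u" unfolding t u_def w_def by simp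
  then have "(cmod (w + of_real t * u))\<^sup>2 = R"
    using assms(7) unfolding on_circle_def R_def by simp
  then have circle: "(Re w + t * Re u)\<^sup>2 + (Im w + t * Im u)\<^sup>2 = R"
    unfolding cmod_power2 by simp
  define A B C where "A = (Re u)\<^sup>2 + (Im u)\<^sup>2" and "B = Re u * Re w + Im u * Im w"
    and "C = (Re w)\<^sup>2 + (Im w)\<^sup>2 - R"
  have mems: "A \<in> K" "B \<in> K" "C \<in> K"
    using assms(1-4) unfolding A_def B_def C_def u_def w_def R_def coords_in_def cmod_power2
    by (simp_all add: field_mems)
  have "A \<noteq> 0" unfolding A_def u_def using assms(5) by (auto simp: complex_eq_iff)
  \<comment> \<open>completing the square in the quadratic equation \<open>A t\<^sup>2 + 2 B t + C = 0\<close>\<close>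
  have "(A * t + B)\<^sup>2 - (B\<^sup>2 - A * C)
      = A * ((Re w + t * Re u)\<^sup>2 + (Im w + t * Im u)\<^sup>2 - R)"
    unfolding A_def B_def C_def by (simp add: power2_eq_square algebra_simps)
  then have "(A * t + B)\<^sup>2 = B\<^sup>2 - A * C" using circle by simp
  then have "(A * t + B)\<^sup>2 \<in> K" using mems by (simp add: field_mems)
  then have "A * t + B \<in> K" by (rule mem_if_power2_mem)
  then have "(A * t + B - B) / A \<in> K" using mems by (intro divide_mem diff_mem)
  then have "t \<in> K" using \<open>A \<noteq> 0\<close> by simp
  then show ?thesis unfolding t using assms(1,2) by (rule coords_in_line_point[rotated 2])
qed

lemma coords_in_circle_circle:
  assumes "coords_in c" "coords_in d" "coords_in c'" "coords_in d'"
    and "c \<noteq> c' \<or> cmod (d - c) \<noteq> cmod (d' - c')" "on_circle c d z" "on_circle c' d' z"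
  shows "coords_in z"
proof -
  have "c \<noteq> c'" using assms(5-7) unfolding on_circle_def by auto
  define X Y dx dy R R' where "X = Re z - Re c" and "Y = Im z - Im c"
    and "dx = Re c' - Re c" and "dy = Im c' - Im c"
    and "R = (cmod (d - c))\<^sup>2" and "R' = (cmod (d' - c'))\<^sup>2"
  have "(cmod (z - c))\<^sup>2 = R" "(cmod (z - c'))\<^sup>2 = R'"
    using assms(6,7) unfolding on_circle_def R_def R'_def by simp_all
  then have circle: "X\<^sup>2 + Y\<^sup>2 = R" and circle': "(X - dx)\<^sup>2 + (Y - dy)\<^sup>2 = R'"
    unfolding X_def Y_def dx_def dy_def cmod_power2 by (simp_all add: algebra_simps)
  define N u w where "N = dx\<^sup>2 + dy\<^sup>2" and "u = X * dx + Y * dy" and "w = Y * dx - X * dy"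
  have "N \<noteq> 0" unfolding N_def dx_def dy_def using \<open>c \<noteq> c'\<close> by (auto simp: complex_eq_iff)
  have mems: "N \<in> K" "dx \<in> K" "dy \<in> K" "R \<in> K" "R' \<in> K"
    using assms(1-4) unfolding N_def dx_def dy_def R_def R'_def coords_in_def cmod_power2
    by (simp_all add: field_mems)
  \<comment> \<open>\<open>u\<close> and \<open>w\<close> are the coordinates of \<open>z - c\<close> in the frame spanned by \<open>c' - c\<close>; the radical axis gives \<open>u\<close>\<close>
  have "X\<^sup>2 + Y\<^sup>2 - ((X - dx)\<^sup>2 + (Y - dy)\<^sup>2) = 2 * u - N"
    unfolding N_def u_def by (simp add: power2_eq_square algebra_simps)
  then have "u = (R - R' + N) / 2" using circle circle' by simp
  moreover have "(R - R' + N) / 2 \<in> K" using mems by (simp add: field_mems)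
  ultimately have "u \<in> K" by metis
  have "w\<^sup>2 = (X\<^sup>2 + Y\<^sup>2) * N - u\<^sup>2"
    unfolding N_def u_def w_def by (simp add: power2_eq_square algebra_simps)
  then have "w\<^sup>2 \<in> K" using circle mems \<open>u \<in> K\<close> by (simp add: field_mems)
  then have "w \<in> K" by (rule mem_if_power2_mem)
  have "X * N = u * dx - w * dy" "Y * N = u * dy + w * dx"
    unfolding N_def u_def w_def by algebra+
  then have "X = (u * dx - w * dy) / N" "Y = (u * dy + w * dx) / N"
    using \<open>N \<noteq> 0\<close> by (simp_all add: field_simps)
  then have "X \<in> K" "Y \<in> K" using \<open>u \<in> K\<close> \<open>w \<in> K\<close> mems by (simp_all add: field_mems)
  then show ?thesis
    using assms(1) unfolding coords_in_def X_def Y_def by (metis add_mem diff_add_cancel)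
qed

lemma coords_in_ray_point:
  assumes sin_mem: "\<And>x. x \<in> K \<Longrightarrow> sin (pi * x) \<in> K"
    and "coords_in V" "coords_in A" "coords_in B" "p \<in> K" "q \<in> K"
  shows "coords_in (ray_point V A B ((p / q) * (pi / 2)))"
proof -
  let ?\<theta> = "(p / q) * (pi / 2)"
  have "p / q / 2 \<in> K" "1 / 2 - p / q / 2 \<in> K" using assms(5,6) by (simp_all add: field_mems)
  then have "sin (pi * (p / q / 2)) \<in> K" "sin (pi * (1 / 2 - p / q / 2)) \<in> K"
    using sin_mem by blast+
  moreover have "sin (pi * (p / q / 2)) = sin ?\<theta>" "sin (pi * (1 / 2 - p / q / 2)) = cos ?\<theta>"
    by (simp_all add: cos_sin_eq algebra_simps)
  moreover have "cmod (A - V) \<in> K" "cmod (B - V) \<in> K"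
    using assms(2-4) by (simp_all add: norm_mem coords_in_diff)
  ultimately show ?thesis
    using assms(2-4) unfolding ray_point_def coords_in_def by (simp add: field_mems)
qed

lemma coords_in_RRA_point:
  assumes arcsin_mem: "\<And>x. x \<in> K \<Longrightarrow> \<bar>x\<bar> \<le> 1 \<Longrightarrow> arcsin x / pi \<in> K"
    and "coords_in V" "coords_in A" "coords_in C" "coords_in P" "coords_in Q"
  shows "coords_in (P + of_real (2 * angle_at V A C / pi) * (Q - P))"
proof -
  define w where "w = Re ((C - V) * cnj (A - V)) / (cmod (C - V) * cmod (A - V))"
  have "coords_in ((C - V) * cnj (A - V))"
    using assms(2-4) by (intro coords_in_mult coords_in_cnj coords_in_diff)
  then have "w \<in> K"
    using assms(2-4) unfolding w_def coords_in_def[of "(C - V) * cnj (A - V)"]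
    by (simp add: divide_mem mult_mem norm_mem coords_in_diff)
  have "\<bar>Re ((C - V) * cnj (A - V))\<bar> \<le> cmod (C - V) * cmod (A - V)"
    using abs_Re_le_cmod[of "(C - V) * cnj (A - V)"] by (simp only: norm_mult complex_mod_cnj)
  then have "\<bar>w\<bar> \<le> 1" unfolding w_def abs_divide
    by (cases "cmod (C - V) * cmod (A - V) = 0") (simp_all add: divide_le_eq_1)
  then have "arccos w = pi / 2 - arcsin w" by (intro arccos_arcsin_eq) linarith+
  then have "2 * angle_at V A C / pi = 1 - 2 * (arcsin w / pi)"
    unfolding angle_at_def w_def[symmetric] by (simp add: field_simps)
  also have "\<dots> \<in> K"
    using arcsin_mem[OF \<open>w \<in> K\<close> \<open>\<bar>w\<bar> \<le> 1\<close>] by (intro diff_mem mult_mem one_mem two_mem)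
  finally show ?thesis using assms(5,6) by (rule coords_in_line_point[rotated 2])
qed

lemma coords_in_constr:
  assumes "constr T z"
    and RA_closed: "T = RA_tool \<Longrightarrow> \<forall>x\<in>K. sin (pi * x) \<in> K"
    and RRA_closed: "T = RRA_tool \<Longrightarrow> \<forall>x\<in>K. \<bar>x\<bar> \<le> 1 \<longrightarrow> arcsin x / pi \<in> K"
  shows "coords_in z"
  using assms(1)
proof induction
  case zero
  then show ?case using zero_mem unfolding coords_in_def by simp
next
  case one
  then show ?case using zero_mem one_mem unfolding coords_in_def by simp
next
  case (line_line a b c d z)
  show ?case by (rule coords_in_line_line[of a b c d]) (use line_line in simp_all)
next
  case (line_circle a b c d z)
  show ?case by (rule coords_in_line_circle[of a b c d]) (use line_circle in simp_all)
next
  case (circle_circle c d c' d' z)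
  show ?case by (rule coords_in_circle_circle[of c d c' d']) (use circle_circle in simp_all)
next
  case (RA V A B P1 P2 Q1 Q2 p q)
  show ?case
    by (rule coords_in_ray_point) (use RA RA_closed in \<open>simp_all add: norm_mem coords_in_diff\<close>)
next
  case (RRA V A B C a b P Q)
  show ?case by (rule coords_in_RRA_point) (use RRA RRA_closed in simp_all)
qed

lemma length_mem_if_coords_in:
  assumes "coords_in P" "coords_in Q" "\<bar>r\<bar> = cmod (P - Q)"
  shows "r \<in> K"
proof -
  have "\<bar>r\<bar> \<in> K" using norm_mem[OF coords_in_diff[OF assms(1,2)]] assms(3) by simp
  then show ?thesis using uminus_mem[of "\<bar>r\<bar>"] by (cases "0 \<le> r") simp_all
qed

end

interpretation RA_numbers: sqrt_closed_subfield RA_numbers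
  by unfold_locales (auto intro: RA_numbers.intros)

interpretation RRA_numbers: sqrt_closed_subfield RRA_numbers
  by unfold_locales (auto intro: RRA_numbers.intros)

lemma constr_of_real_RA_numbers: "x \<in> RA_numbers \<Longrightarrow> constr RA_tool (of_real x)"
proof (induction rule: RA_numbers.induct)
  case one
  then show ?case using constr.one by simp
next
  case (add x y)
  then show ?case using constr_add by fastforce
next
  case (diff x y)
  then show ?case using constr_diff by fastforce
next
  case (mult x y)
  then show ?case using constr_of_real_mult by blast
next
  case (divide x y)
  then show ?case using constr_of_real_divide by blast
next
  case (sqrt x)
  then show ?case using constr_of_real_sqrt by blast
next
  case (sin_pi x)
  then show ?case using constr_RA_sin_pi by blast
qed

lemma constr_of_real_RRA_numbers: "x \<in> RRA_numbers \<Longrightarrow> constr RRA_tool (of_real x)"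
proof (induction rule: RRA_numbers.induct)
  case one
  then show ?case using constr.one by simp
next
  case (add x y)
  then show ?case using constr_add by fastforce
next
  case (diff x y)
  then show ?case using constr_diff by fastforce
next
  case (mult x y)
  then show ?case using constr_of_real_mult by blast
next
  case (divide x y)
  then show ?case using constr_of_real_divide by blast
next
  case (sqrt x)
  then show ?case using constr_of_real_sqrt by blast
next
  case (arcsin_pi x)
  then show ?case using constr_RRA_arcsin_div_pi by blast
qed

lemma RA_constructible_iff: "RA_constructible r \<longleftrightarrow> r \<in> RA_numbers"
proof
  assume "RA_constructible r"
  then obtain P Q where "constr RA_tool P" "constr RA_tool Q" "\<bar>r\<bar> = cmod (P - Q)"
    unfolding RA_constructible_def by blast
  then show "r \<in> RA_numbers"
    by (intro RA_numbers.length_mem_if_coords_in RA_numbers.coords_in_constr)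
      (auto intro: RA_numbers.sin_pi)
next
  assume "r \<in> RA_numbers"
  then show "RA_constructible r"
    unfolding RA_constructible_def using constr_of_real_RA_numbers constr.zero by fastforce
qed

lemma RRA_constructible_iff: "RRA_constructible r \<longleftrightarrow> r \<in> RRA_numbers"
proof
  assume "RRA_constructible r"
  then obtain P Q where "constr RRA_tool P" "constr RRA_tool Q" "\<bar>r\<bar> = cmod (P - Q)"
    unfolding RRA_constructible_def by blast
  then show "r \<in> RRA_numbers"
    by (intro RRA_numbers.length_mem_if_coords_in RRA_numbers.coords_in_constr)
      (auto intro: RRA_numbers.arcsin_pi)
next
  assume "r \<in> RRA_numbers"
  then show "RRA_constructible r"
    unfolding RRA_constructible_def using constr_of_real_RRA_numbers constr.zero by fastforce
qed

theorem theorem7p2: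
  shows "(\<forall>r::real. RA_constructible r \<longleftrightarrow> r \<in> RA_numbers) \<and>
         (\<forall>r::real. RRA_constructible r \<longleftrightarrow> r \<in> RRA_numbers)"
  using RA_constructible_iff RRA_constructible_iff by blast

end
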